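(* Let $\rho>0$ and for an indexed family $\xi=(\xi_{l,m,n})_{(l,m,n)\in\mathbb{Z}_+^3\setminus\{\mathbf 0\}}$ define $\mathcal T\xi_{l,m,n}=\frac{n\rho}{2}\xi_{l+1,m+1,n-1}+\frac{l(l-1+2n)}{2}\xi_{l-1,m,n}+\frac{m(m-1+2n)}{2}\xi_{l,m-1,n}+\frac{n(n-1)}{2}\xi_{l,m,n-1}+lm\,\xi_{l-1,m-1,n+1}$, where terms with a negative index are zero. For any $R,K\in\mathbb{Z}_+$ and any $(l,m,n)$ of rank at most $R$ and class at most $K$, $\mathcal T\xi_{l,m,n}$ is a linear combination of entries $\xi_{l',m',n'}$ whose rank is at most $R$ and class at most $K$ (i.e. the span of moments of rank $\le R$ and class $\le K$ is closed under $\mathcal T$). Moreover the indices $(l+1,m+1,n-1)$ (recombination term) and $(l-1,m-1,n+1)$ (null coalescence term) have the same rank and class as $(l,m,n)$.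
   Context: The rank of $(l,m,n)\in\mathbb{Z}_+^3$ (equivalently of the moment $\mathbb{E}[x^l y^m x_1^n]$) is $l+m+2n$ and its class is $n+\min\{l,m\}$. *)

theory Defs
  imports Complex_Main
begin

definition rank :: "nat \<times> nat \<times> nat \<Rightarrow> nat" where
  "rank i = (case i of (l, m, n) \<Rightarrow> l + m + 2 * n)"

definition cls :: "nat \<times> nat \<times> nat \<Rightarrow> nat" where
  "cls i = (case i of (l, m, n) \<Rightarrow> n + min l m)"

text \<open>A family xi indexed by Z_+^3 minus 0 is represented as a
function on all triples (its value at (0,0,0) only ever enters with coefficient 0).\<close>

definition Top :: "real \<Rightarrow> (nat \<times> nat \<times> nat \<Rightarrow> real) \<Rightarrow> nat \<times> nat \<times> nat \<Rightarrow> real" where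
  "Top \<rho> \<xi> i = (case i of (l, m, n) \<Rightarrow>
      (if n \<ge> 1 then real n * \<rho> / 2 * \<xi> (l + 1, m + 1, n - 1) else 0)
    + (if l \<ge> 1 then real l * (real l - 1 + 2 * real n) / 2 * \<xi> (l - 1, m, n) else 0)
    + (if m \<ge> 1 then real m * (real m - 1 + 2 * real n) / 2 * \<xi> (l, m - 1, n) else 0)
    + (if n \<ge> 1 then real n * (real n - 1) / 2 * \<xi> (l, m, n - 1) else 0)
    + (if l \<ge> 1 \<and> m \<ge> 1 then real l * real m * \<xi> (l - 1, m - 1, n + 1) else 0))"

end

theory Submission
  imports Defs
begin

text \<open>Every term of \<open>T\<xi>\<^sub>l\<^sub>,\<^sub>m\<^sub>,\<^sub>n\<close> involves an index obtained from \<open>(l,m,n)\<close>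
either by lowering components, which can only decrease rank and class, or by one of the two
moves \<open>(l,m,n) \<mapsto> (l+1,m+1,n-1)\<close> and \<open>(l,m,n) \<mapsto> (l-1,m-1,n+1)\<close>, which trade one unit of
\<open>n\<close> against one unit of each of \<open>l\<close> and \<open>m\<close> and so preserve both. The index \<open>(0,0,0)\<close> can
only be reached from \<open>(1,0,0)\<close>, \<open>(0,1,0)\<close> or \<open>(0,0,1)\<close>, and there its coefficient vanishes.\<close>

definition in_moment_span ::
    "nat \<Rightarrow> nat \<Rightarrow> ((nat \<times> nat \<times> nat \<Rightarrow> real) \<Rightarrow> real) \<Rightarrow> bool" where
  "in_moment_span R K F \<longleftrightarrow>
     (\<exists>S c. finite S \<and> (\<forall>j\<in>S. j \<noteq> (0, 0, 0) \<and> rank j \<le> R \<and> cls j \<le> K)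
            \<and> (\<forall>\<xi>. F \<xi> = (\<Sum>j\<in>S. c j * \<xi> j)))"

lemma in_moment_span_add:
  assumes "in_moment_span R K F" and "in_moment_span R K G"
  shows "in_moment_span R K (\<lambda>\<xi>. F \<xi> + G \<xi>)"
proof -
  obtain S c where S: "finite S" "\<forall>j\<in>S. j \<noteq> (0, 0, 0) \<and> rank j \<le> R \<and> cls j \<le> K"
    and F: "\<And>\<xi>. F \<xi> = (\<Sum>j\<in>S. c j * \<xi> j)"
    using assms(1) unfolding in_moment_span_def by blast
  obtain S' c' where S': "finite S'" "\<forall>j\<in>S'. j \<noteq> (0, 0, 0) \<and> rank j \<le> R \<and> cls j \<le> K"
    and G: "\<And>\<xi>. G \<xi> = (\<Sum>j\<in>S'. c' j * \<xi> j)"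
    using assms(2) unfolding in_moment_span_def by blast
  define d where "d j = (if j \<in> S then c j else 0) + (if j \<in> S' then c' j else 0)" for j
  have "F \<xi> + G \<xi> = (\<Sum>j\<in>S \<union> S'. d j * \<xi> j)" for \<xi>
  proof -
    have "F \<xi> = (\<Sum>j\<in>S \<union> S'. (if j \<in> S then c j else 0) * \<xi> j)"
      unfolding F using S(1) S'(1) by (intro sum.mono_neutral_cong_left) auto
    moreover have "G \<xi> = (\<Sum>j\<in>S \<union> S'. (if j \<in> S' then c' j else 0) * \<xi> j)"
      unfolding G using S(1) S'(1) by (intro sum.mono_neutral_cong_left) auto
    ultimately show ?thesis
      by (simp add: d_def distrib_right sum.distrib)
  qed
  then show ?thesis
    unfolding in_moment_span_def using S S' by (intro exI[of _ "S \<union> S'"] exI[of _ d]) auto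
qed

lemma in_moment_span_guarded_entry:
  assumes "P \<Longrightarrow> a \<noteq> 0 \<Longrightarrow> j \<noteq> (0, 0, 0) \<and> rank j \<le> R \<and> cls j \<le> K"
  shows "in_moment_span R K (\<lambda>\<xi>. if P then a * \<xi> j else 0)"
proof (cases "P \<and> a \<noteq> 0")
  case True
  then show ?thesis
    unfolding in_moment_span_def using assms
    by (intro exI[of _ "{j}"] exI[of _ "\<lambda>_. a"]) auto
next
  case False
  then show ?thesis
    unfolding in_moment_span_def by (intro exI[of _ "{}"]) auto
qed

lemma rank_mono: "l' \<le> l \<Longrightarrow> m' \<le> m \<Longrightarrow> n' \<le> n \<Longrightarrow> rank (l', m', n') \<le> rank (l, m, n)"
  unfolding rank_def by simp

lemma cls_mono: "l' \<le> l \<Longrightarrow> m' \<le> m \<Longrightarrow> n' \<le> n \<Longrightarrow> cls (l', m', n') \<le> cls (l, m, n)"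
  unfolding cls_def by (simp add: add_mono min.mono)

lemma rank_recombination: "n \<ge> 1 \<Longrightarrow> rank (l + 1, m + 1, n - 1) = rank (l, m, n)"
  unfolding rank_def by simp

lemma cls_recombination: "n \<ge> 1 \<Longrightarrow> cls (l + 1, m + 1, n - 1) = cls (l, m, n)"
  unfolding cls_def by simp

lemma rank_coalescence: "l \<ge> 1 \<Longrightarrow> m \<ge> 1 \<Longrightarrow> rank (l - 1, m - 1, n + 1) = rank (l, m, n)"
  unfolding rank_def by simp

lemma cls_coalescence: "l \<ge> 1 \<Longrightarrow> m \<ge> 1 \<Longrightarrow> cls (l - 1, m - 1, n + 1) = cls (l, m, n)"
  by (auto simp: cls_def min_def)

lemma Top_in_moment_span:
  assumes "rank (l, m, n) \<le> R" and "cls (l, m, n) \<le> K"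
  shows "in_moment_span R K (\<lambda>\<xi>. Top \<rho> \<xi> (l, m, n))"
  unfolding Top_def prod.case
proof (intro in_moment_span_add in_moment_span_guarded_entry)
  show "(l + 1, m + 1, n - 1) \<noteq> (0, 0, 0) \<and> rank (l + 1, m + 1, n - 1) \<le> R
        \<and> cls (l + 1, m + 1, n - 1) \<le> K" if "n \<ge> 1"
    using that assms rank_recombination cls_recombination by simp
  show "(l - 1, m - 1, n + 1) \<noteq> (0, 0, 0) \<and> rank (l - 1, m - 1, n + 1) \<le> R
        \<and> cls (l - 1, m - 1, n + 1) \<le> K" if "l \<ge> 1 \<and> m \<ge> 1"
    using that assms rank_coalescence cls_coalescence by simp
  show "(l - 1, m, n) \<noteq> (0, 0, 0) \<and> rank (l - 1, m, n) \<le> R \<and> cls (l - 1, m, n) \<le> K"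
    if "l \<ge> 1" "real l * (real l - 1 + 2 * real n) / 2 \<noteq> 0"
    using that assms rank_mono[of "l - 1" l m m n n] cls_mono[of "l - 1" l m m n n] by auto
  show "(l, m - 1, n) \<noteq> (0, 0, 0) \<and> rank (l, m - 1, n) \<le> R \<and> cls (l, m - 1, n) \<le> K"
    if "m \<ge> 1" "real m * (real m - 1 + 2 * real n) / 2 \<noteq> 0"
    using that assms rank_mono[of l l "m - 1" m n n] cls_mono[of l l "m - 1" m n n] by auto
  show "(l, m, n - 1) \<noteq> (0, 0, 0) \<and> rank (l, m, n - 1) \<le> R \<and> cls (l, m, n - 1) \<le> K"
    if "n \<ge> 1" "real n * (real n - 1) / 2 \<noteq> 0"
    using that assms rank_mono[of l l m m "n - 1" n] cls_mono[of l l m m "n - 1" n] by auto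
qed

theorem mainTheorem2:
  fixes \<rho> :: real and R K l m n :: nat
  assumes "\<rho> > 0"
    and "(l, m, n) \<noteq> (0, 0, 0)"
    and "rank (l, m, n) \<le> R" and "cls (l, m, n) \<le> K"
  shows "(\<exists>S :: (nat \<times> nat \<times> nat) set. \<exists>c :: nat \<times> nat \<times> nat \<Rightarrow> real.
            finite S \<and>
            (\<forall>j\<in>S. j \<noteq> (0, 0, 0) \<and> rank j \<le> R \<and> cls j \<le> K) \<and>
            (\<forall>\<xi>. Top \<rho> \<xi> (l, m, n) = (\<Sum>j\<in>S. c j * \<xi> j)))
       \<and> (n \<ge> 1 \<longrightarrow> rank (l + 1, m + 1, n - 1) = rank (l, m, n)
                    \<and> cls (l + 1, m + 1, n - 1) = cls (l, m, n))
       \<and> (l \<ge> 1 \<and> m \<ge> 1 \<longrightarrow> rank (l - 1, m - 1, n + 1) = rank (l, m, n)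
                    \<and> cls (l - 1, m - 1, n + 1) = cls (l, m, n))"
proof (intro conjI impI)
  show "\<exists>S c. finite S \<and> (\<forall>j\<in>S. j \<noteq> (0, 0, 0) \<and> rank j \<le> R \<and> cls j \<le> K)
          \<and> (\<forall>\<xi>. Top \<rho> \<xi> (l, m, n) = (\<Sum>j\<in>S. c j * \<xi> j))"
    using Top_in_moment_span[OF assms(3,4), of \<rho>] unfolding in_moment_span_def .
qed (use rank_recombination cls_recombination rank_coalescence cls_coalescence in auto)

end
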